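(* Let $h\ge0$, let $m\in U$ and let $(u_{\alpha,\beta})_{\alpha+\beta\le h}$ be an element of $R_h$ at $m$. Put $v^{(k)}:=u_{0,k}$ for $0\le k\le h$. Then the whole element is determined by $v^{(0)},\dots,v^{(h)}$; more precisely, for all $\alpha+\beta\le h$, $$u_{\alpha,\beta}=\sum_{k=0}^{\alpha+\beta}E^k_{\alpha,\beta}\,v^{(k)},$$ where the $(d-2)\times(d-2)$ matrices $E^k_{\alpha,\beta}$ depend only on $M$ and its partial derivatives and are determined by $E^k_{0,k}=\mathrm{Id}_{d-2}$, $E^{h'}_{0,k}=0$ for $h'<k$, the convention $E^{h'}_{\gamma,\delta}=0$ if $h'>\gamma+\delta$, and the recursion (on $\alpha+\beta$, then on $\alpha$ for fixed $\alpha+\beta$) $$E^{h'}_{\alpha+1,\beta}=-(J_0I^0)\,E^{h'}_{\alpha,\beta+1}+\sum_{\gamma=0}^{\alpha}\sum_{\delta=0}^{\beta}(J_0M^{\gamma,\delta}_{\alpha,\beta})\,E^{h'}_{\gamma,\delta}.$$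
   Context: Let $d\ge 3$, $U\subset\mathbb{C}^2$ open with coordinates $(x,y)$, and let $M$ be the $(d-1)\times(d-2)$ matrix of holomorphic functions on $U$ defined as follows. Let $F(x,y,p)=\sum_{i=0}^d a_i(x,y)p^{d-i}$, $a_i$ holomorphic, $a_0\equiv1$, with $F=\prod_{i=1}^d(p-p_i(x,y))$, the $p_i$ holomorphic and pairwise distinct at every point. A polynomial $P=\sum_{i=0}^kg_ip^i$ is identified with $(g_0,\dots,g_k)^T$; $M(P)$ is the $(h+k+1)\times(h+1)$ multiplication matrix with $0$-based entry $(i,j)$ equal to $g_{i-j}$ if $0\le i-j\le k$, else $0$. Put $K=F'_x+pF'_y$, $H=KF''_{pp}-K'_pF'_p$, $L=KF'_p$; take $M(F)$ of size $(3d-3)\times(2d-3)$, $M((F'_p)^2)$ of size $(3d-3)\times(d-1)$, $M(L),M(H)$ of size $(3d-3)\times(d-2)$. For a matrix $X$ with $3d-3$ rows, $X^+$ (resp. $X^-$) is the submatrix of its first $d$ (resp. last $2d-3$) rows. $N$ is the $(d-2)\times(d-2)$ matrix with only nonzero entries $N_{j,j+1}=j$ ($1\le j\le d-3$, 1-based). $B=M^+((F'_p)^2)-M^+(F)(M^-(F))^{-1}M^-((F'_p)^2)$ (rank $d-1$), $E=(M^+(H)-M^+(L)N)-M^+(F)(M^-(F))^{-1}(M^-(H)-M^-(L)N)$, $T$ a left inverse of $B$, and $M=-TE$. $I_0$ (resp. $I^0$) is the $(d-1)\times(d-2)$ matrix formed by $\mathrm{Id}_{d-2}$ followed by (resp.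 preceded by) a zero row. $J_0$ is the $(d-2)\times(d-1)$ matrix obtained by adding a column of zeros to the right of $\mathrm{Id}_{d-2}$. $M'_{a,b}$ denotes $\partial^{a+b}M/\partial x^a\partial y^b$ and $M^{\gamma,\delta}_{\alpha,\beta}:=\binom{\alpha}{\gamma}\binom{\beta}{\delta}M'_{\alpha-\gamma,\beta-\delta}$. $R_h$ (formal abelian relations of order $h$): its fiber at $m\in U$ is the set of families $(u_{\alpha,\beta})_{\alpha+\beta\le h}$ of vectors in $\mathbb{C}^{d-2}$ such that for all $\alpha,\beta\ge0$ with $\alpha+\beta\le h-1$: $$I_0u_{\alpha+1,\beta}+I^0u_{\alpha,\beta+1}=\sum_{\gamma=0}^\alpha\sum_{\delta=0}^\beta M^{\gamma,\delta}_{\alpha,\beta}(m)\,u_{\gamma,\delta}$$ (the equations obtained by differentiating $\alpha$ times in $x$ and $\beta$ times in $y$ the system $I_0r'_x+I^0r'_y=Mr$). *)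

theory Defs
  imports "Jordan_Normal_Form.Matrix" "HOL-Analysis.Derivative" "HOL-Computational_Algebra.Polynomial"
begin

type_synonym cfun = "complex \<times> complex \<Rightarrow> complex"

definition pdx :: "cfun \<Rightarrow> cfun" where
  "pdx f z = deriv (\<lambda>t. f (t, snd z)) (fst z)"
definition pdy :: "cfun \<Rightarrow> cfun" where
  "pdy f z = deriv (\<lambda>t. f (fst z, t)) (snd z)"

text \<open>Holomorphic in two variables (Osgood: continuous and separately holomorphic).\<close>
definition holo2 :: "(complex \<times> complex) set \<Rightarrow> cfun \<Rightarrow> bool" where
  "holo2 U f \<longleftrightarrow> continuous_on U f \<and>
     (\<forall>z\<in>U. (\<lambda>t. f (t, snd z)) field_differentiable at (fst z) \<and>
             (\<lambda>t. f (fst z, t)) field_differentiable at (snd z))"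

definition Fpoly :: "nat \<Rightarrow> (nat \<Rightarrow> cfun) \<Rightarrow> complex \<times> complex \<Rightarrow> complex poly" where
  "Fpoly d a z = (\<Sum>i\<le>d. monom (a i z) (d - i))"
definition Fxpoly :: "nat \<Rightarrow> (nat \<Rightarrow> cfun) \<Rightarrow> complex \<times> complex \<Rightarrow> complex poly" where
  "Fxpoly d a z = (\<Sum>i\<le>d. monom (pdx (a i) z) (d - i))"
definition Fypoly :: "nat \<Rightarrow> (nat \<Rightarrow> cfun) \<Rightarrow> complex \<times> complex \<Rightarrow> complex poly" where
  "Fypoly d a z = (\<Sum>i\<le>d. monom (pdy (a i) z) (d - i))"
definition Kpoly :: "nat \<Rightarrow> (nat \<Rightarrow> cfun) \<Rightarrow> complex \<times> complex \<Rightarrow> complex poly" where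
  "Kpoly d a z = Fxpoly d a z + [:0, 1:] * Fypoly d a z"
definition Hpoly :: "nat \<Rightarrow> (nat \<Rightarrow> cfun) \<Rightarrow> complex \<times> complex \<Rightarrow> complex poly" where
  "Hpoly d a z = Kpoly d a z * pderiv (pderiv (Fpoly d a z))
                 - pderiv (Kpoly d a z) * pderiv (Fpoly d a z)"
definition Lpoly :: "nat \<Rightarrow> (nat \<Rightarrow> cfun) \<Rightarrow> complex \<times> complex \<Rightarrow> complex poly" where
  "Lpoly d a z = Kpoly d a z * pderiv (Fpoly d a z)"

definition mulmat :: "nat \<Rightarrow> nat \<Rightarrow> complex poly \<Rightarrow> complex mat" where
  "mulmat r c P = Matrix.mat r c (\<lambda>(i, j). if j \<le> i then coeff P (i - j) else 0)"

definition topm :: "nat \<Rightarrow> complex mat \<Rightarrow> complex mat" where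
  "topm d X = Matrix.mat d (dim_col X) (\<lambda>(i, j). X $$ (i, j))"
definition botm :: "nat \<Rightarrow> complex mat \<Rightarrow> complex mat" where
  "botm d X = Matrix.mat (2 * d - 3) (dim_col X) (\<lambda>(i, j). X $$ (i + d, j))"

definition minv :: "nat \<Rightarrow> complex mat \<Rightarrow> complex mat" where
  "minv n A = (SOME X. X \<in> carrier_mat n n \<and> A * X = 1\<^sub>m n \<and> X * A = 1\<^sub>m n)"

definition Nmat :: "nat \<Rightarrow> complex mat" where
  "Nmat d = Matrix.mat (d - 2) (d - 2) (\<lambda>(i, j). if j = i + 1 then of_nat (i + 1) else 0)"

definition MF :: "nat \<Rightarrow> (nat \<Rightarrow> cfun) \<Rightarrow> complex \<times> complex \<Rightarrow> complex mat" where
  "MF d a z = mulmat (3 * d - 3) (2 * d - 3) (Fpoly d a z)"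
definition MFp2 :: "nat \<Rightarrow> (nat \<Rightarrow> cfun) \<Rightarrow> complex \<times> complex \<Rightarrow> complex mat" where
  "MFp2 d a z = mulmat (3 * d - 3) (d - 1) ((pderiv (Fpoly d a z))\<^sup>2)"
definition MLm :: "nat \<Rightarrow> (nat \<Rightarrow> cfun) \<Rightarrow> complex \<times> complex \<Rightarrow> complex mat" where
  "MLm d a z = mulmat (3 * d - 3) (d - 2) (Lpoly d a z)"
definition MHm :: "nat \<Rightarrow> (nat \<Rightarrow> cfun) \<Rightarrow> complex \<times> complex \<Rightarrow> complex mat" where
  "MHm d a z = mulmat (3 * d - 3) (d - 2) (Hpoly d a z)"

definition Bmat :: "nat \<Rightarrow> (nat \<Rightarrow> cfun) \<Rightarrow> complex \<times> complex \<Rightarrow> complex mat" where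
  "Bmat d a z = topm d (MFp2 d a z)
     - topm d (MF d a z) * minv (2 * d - 3) (botm d (MF d a z)) * botm d (MFp2 d a z)"
definition Emat :: "nat \<Rightarrow> (nat \<Rightarrow> cfun) \<Rightarrow> complex \<times> complex \<Rightarrow> complex mat" where
  "Emat d a z = (topm d (MHm d a z) - topm d (MLm d a z) * Nmat d)
     - topm d (MF d a z) * minv (2 * d - 3) (botm d (MF d a z))
       * (botm d (MHm d a z) - botm d (MLm d a z) * Nmat d)"

text \<open>The matrix M = -T E, for a left inverse T of B.\<close>
definition Mmat :: "nat \<Rightarrow> (nat \<Rightarrow> cfun) \<Rightarrow> (complex \<times> complex \<Rightarrow> complex mat)
    \<Rightarrow> complex \<times> complex \<Rightarrow> complex mat" where
  "Mmat d a T z = - (T z * Emat d a z)"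

definition Mder :: "nat \<Rightarrow> (nat \<Rightarrow> cfun) \<Rightarrow> (complex \<times> complex \<Rightarrow> complex mat)
    \<Rightarrow> nat \<Rightarrow> nat \<Rightarrow> complex \<times> complex \<Rightarrow> complex mat" where
  "Mder d a T \<alpha> \<beta> z = Matrix.mat (d - 1) (d - 2)
     (\<lambda>(i, j). (pdx ^^ \<alpha>) ((pdy ^^ \<beta>) (\<lambda>w. Mmat d a T w $$ (i, j))) z)"

definition Mcoef :: "nat \<Rightarrow> (nat \<Rightarrow> cfun) \<Rightarrow> (complex \<times> complex \<Rightarrow> complex mat)
    \<Rightarrow> complex \<times> complex \<Rightarrow> nat \<Rightarrow> nat \<Rightarrow> nat \<Rightarrow> nat \<Rightarrow> complex mat" where
  "Mcoef d a T z \<gamma> \<delta> \<alpha> \<beta> =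
     of_nat ((\<alpha> choose \<gamma>) * (\<beta> choose \<delta>)) \<cdot>\<^sub>m Mder d a T (\<alpha> - \<gamma>) (\<beta> - \<delta>) z"

definition I_low :: "nat \<Rightarrow> complex mat" where
  "I_low d = Matrix.mat (d - 1) (d - 2) (\<lambda>(i, j). if i = j then 1 else 0)"
definition I_up :: "nat \<Rightarrow> complex mat" where
  "I_up d = Matrix.mat (d - 1) (d - 2) (\<lambda>(i, j). if i = j + 1 then 1 else 0)"
definition J0 :: "nat \<Rightarrow> complex mat" where
  "J0 d = Matrix.mat (d - 2) (d - 1) (\<lambda>(i, j). if i = j then 1 else 0)"

definition vsum :: "nat \<Rightarrow> ('b \<Rightarrow> complex Matrix.vec) \<Rightarrow> 'b set \<Rightarrow> complex Matrix.vec" where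
  "vsum n f S = Matrix.vec n (\<lambda>i. \<Sum>s\<in>S. vec_index (f s) i)"
definition msum :: "nat \<Rightarrow> nat \<Rightarrow> ('b \<Rightarrow> complex mat) \<Rightarrow> 'b set \<Rightarrow> complex mat" where
  "msum n k f S = Matrix.mat n k (\<lambda>(i, j). \<Sum>s\<in>S. f s $$ (i, j))"

lemma msum_cong [fundef_cong]:
  "S = S' \<Longrightarrow> (\<And>x. x \<in> S' \<Longrightarrow> f x = g x) \<Longrightarrow> msum n k f S = msum n k g S'"
  unfolding msum_def by (auto intro!: sum.cong)

definition in_Rh :: "nat \<Rightarrow> (nat \<Rightarrow> cfun) \<Rightarrow> (complex \<times> complex \<Rightarrow> complex mat)
    \<Rightarrow> nat \<Rightarrow> complex \<times> complex \<Rightarrow> (nat \<Rightarrow> nat \<Rightarrow> complex Matrix.vec) \<Rightarrow> bool" where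
  "in_Rh d a T h m u \<longleftrightarrow>
     (\<forall>\<alpha> \<beta>. \<alpha> + \<beta> \<le> h \<longrightarrow> u \<alpha> \<beta> \<in> carrier_vec (d - 2)) \<and>
     (\<forall>\<alpha> \<beta>. \<alpha> + \<beta> + 1 \<le> h \<longrightarrow>
        I_low d *\<^sub>v u (\<alpha> + 1) \<beta> + I_up d *\<^sub>v u \<alpha> (\<beta> + 1) =
        vsum (d - 1) (\<lambda>(\<gamma>, \<delta>). Mcoef d a T m \<gamma> \<delta> \<alpha> \<beta> *\<^sub>v u \<gamma> \<delta>) ({0..\<alpha>} \<times> {0..\<beta>}))"

function Ecoef :: "nat \<Rightarrow> (nat \<Rightarrow> nat \<Rightarrow> nat \<Rightarrow> nat \<Rightarrow> complex mat)
    \<Rightarrow> nat \<Rightarrow> nat \<Rightarrow> nat \<Rightarrow> complex mat" where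
  "Ecoef d Mc h' 0 \<beta> = (if h' = \<beta> then 1\<^sub>m (d - 2) else 0\<^sub>m (d - 2) (d - 2))"
| "Ecoef d Mc h' (Suc \<alpha>) \<beta> =
     (if h' > Suc \<alpha> + \<beta> then 0\<^sub>m (d - 2) (d - 2)
      else - (J0 d * I_up d) * Ecoef d Mc h' \<alpha> (Suc \<beta>)
           + msum (d - 2) (d - 2) (\<lambda>(\<gamma>, \<delta>). (J0 d * Mc \<gamma> \<delta> \<alpha> \<beta>) * Ecoef d Mc h' \<gamma> \<delta>)
               ({0..\<alpha>} \<times> {0..\<beta>}))"
  by pat_completeness auto
termination
  by (relation "measure (\<lambda>(d, Mc, h', \<alpha>, \<beta>). \<alpha>)") auto

end

theory Submission
  imports Defs
begin

text \<open>Applying \<open>J\<^sub>0\<close> to the relation of \<open>R\<^sub>h\<close> at \<open>(\<alpha>, \<beta>)\<close> solves it for \<open>u (\<alpha>+1) \<beta>\<close>,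
  because \<open>J\<^sub>0 I\<^sub>0 = Id\<close>: \<open>u (\<alpha>+1) \<beta> = J\<^sub>0 (\<Sum>\<gamma>\<le>\<alpha>, \<delta>\<le>\<beta>. M\<^sup>\<gamma>\<^sup>,\<^sup>\<delta>\<^sub>\<alpha>\<^sub>,\<^sub>\<beta> u \<gamma> \<delta>) - J\<^sub>0 I\<^sup>0 u \<alpha> (\<beta>+1)\<close>.
  All terms on the right have first index at most \<open>\<alpha>\<close>, so strong induction on \<open>\<alpha>\<close> expresses every
  \<open>u \<alpha> \<beta>\<close> through the \<open>u 0 k\<close>, with coefficients obeying exactly the recursion that defines \<open>Ecoef\<close>.\<close>

lemma dim_vsum [simp]: "dim_vec (vsum n f S) = n"
  by (simp add: vsum_def)

lemma vsum_carrier [simp]: "vsum n f S \<in> carrier_vec n"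
  by (simp add: vsum_def)

lemma index_vsum [simp]: "i < n \<Longrightarrow> vsum n f S $ i = (\<Sum>s\<in>S. f s $ i)"
  by (simp add: vsum_def)

lemma msum_carrier [simp]: "msum n k f S \<in> carrier_mat n k"
  by (simp add: msum_def)

lemma vsum_cong: "S = S' \<Longrightarrow> (\<And>s. s \<in> S' \<Longrightarrow> f s = g s) \<Longrightarrow> vsum n f S = vsum n g S'"
  by (simp add: vsum_def)

lemma vsum_zero: "vsum n (\<lambda>s. 0\<^sub>v n) S = 0\<^sub>v n"
  by (intro eq_vecI) auto

lemma vsum_mono_neutral_right:
  assumes "finite T" "S \<subseteq> T" "\<And>s. s \<in> T - S \<Longrightarrow> f s = 0\<^sub>v n"
  shows "vsum n f T = vsum n f S"
  using assms by (intro eq_vecI) (auto intro!: sum.mono_neutral_right)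

lemma vsum_delta:
  assumes "finite S" "v \<in> carrier_vec n"
  shows "vsum n (\<lambda>k. if k = s then v else 0\<^sub>v n) S = (if s \<in> S then v else 0\<^sub>v n)"
  using assms by (intro eq_vecI) (auto simp: if_distrib[where f = "\<lambda>w. vec_index w i" for i] cong: if_cong)

lemma vsum_swap:
  "vsum n (\<lambda>k. vsum n (g k) S) K = vsum n (\<lambda>s. vsum n (\<lambda>k. g k s) K) S"
  by (intro eq_vecI) (auto simp: sum.swap[of _ S])

lemma vsum_diff:
  assumes "\<And>s. s \<in> S \<Longrightarrow> f s \<in> carrier_vec n" "\<And>s. s \<in> S \<Longrightarrow> g s \<in> carrier_vec n"
  shows "vsum n (\<lambda>s. f s - g s) S = vsum n f S - vsum n g S"
proof (rule eq_vecI)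
  fix i assume "i < dim_vec (vsum n f S - vsum n g S)"
  then have "i < n" by simp
  moreover have "(f s - g s) $ i = f s $ i - g s $ i" if "s \<in> S" for s
    using \<open>i < n\<close> assms[OF that] by simp
  ultimately show "vsum n (\<lambda>s. f s - g s) S $ i = (vsum n f S - vsum n g S) $ i"
    by (simp add: sum_subtractf)
qed simp

lemma mult_mat_vec_vsum:
  assumes A: "A \<in> carrier_mat r n" and f: "\<And>s. s \<in> S \<Longrightarrow> f s \<in> carrier_vec n"
  shows "A *\<^sub>v vsum n f S = vsum r (\<lambda>s. A *\<^sub>v f s) S"
proof (rule eq_vecI)
  fix i assume "i < dim_vec (vsum r (\<lambda>s. A *\<^sub>v f s) S)"
  hence i: "i < r" by simp
  have "(A *\<^sub>v vsum n f S) $ i = (\<Sum>j<n. A $$ (i, j) * (\<Sum>s\<in>S. f s $ j))"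
    using A i by (simp add: scalar_prod_def lessThan_atLeast0)
  also have "\<dots> = (\<Sum>s\<in>S. \<Sum>j<n. A $$ (i, j) * f s $ j)"
    by (simp add: sum_distrib_left sum.swap[of _ S])
  also have "\<dots> = (\<Sum>s\<in>S. (A *\<^sub>v f s) $ i)"
    using A i by (intro sum.cong) (auto simp: scalar_prod_def lessThan_atLeast0 dest!: f)
  finally show "(A *\<^sub>v vsum n f S) $ i = vsum r (\<lambda>s. A *\<^sub>v f s) S $ i"
    using i by simp
qed (use A in simp)

lemma msum_mult_mat_vec:
  assumes f: "\<And>s. s \<in> S \<Longrightarrow> f s \<in> carrier_mat n k" and v: "v \<in> carrier_vec k"
  shows "msum n k f S *\<^sub>v v = vsum n (\<lambda>s. f s *\<^sub>v v) S"
proof (rule eq_vecI)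
  fix i assume "i < dim_vec (vsum n (\<lambda>s. f s *\<^sub>v v) S)"
  hence i: "i < n" by simp
  have "(msum n k f S *\<^sub>v v) $ i = (\<Sum>j<k. (\<Sum>s\<in>S. f s $$ (i, j)) * v $ j)"
    using v i by (simp add: scalar_prod_def lessThan_atLeast0 msum_def)
  also have "\<dots> = (\<Sum>s\<in>S. \<Sum>j<k. f s $$ (i, j) * v $ j)"
    by (simp add: sum_distrib_right sum.swap[of _ S])
  also have "\<dots> = (\<Sum>s\<in>S. (f s *\<^sub>v v) $ i)"
    using v i by (intro sum.cong) (auto simp: scalar_prod_def lessThan_atLeast0 dest!: f)
  finally show "(msum n k f S *\<^sub>v v) $ i = vsum n (\<lambda>s. f s *\<^sub>v v) S $ i"
    using i by simp
qed (simp add: msum_def)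

lemma zero_mult_mat_vec: "v \<in> carrier_vec k \<Longrightarrow> 0\<^sub>m n k *\<^sub>v v = 0\<^sub>v n"
  by (intro eq_vecI) (auto simp: scalar_prod_def)

lemma mult_mat_vec_zero: "A \<in> carrier_mat n k \<Longrightarrow> A *\<^sub>v 0\<^sub>v k = 0\<^sub>v n"
  by (intro eq_vecI) (auto simp: scalar_prod_def)

lemma add_diff_cancel_right_vec:
  fixes x y :: "'a :: group_add Matrix.vec"
  shows "x \<in> carrier_vec n \<Longrightarrow> y \<in> carrier_vec n \<Longrightarrow> x + y - y = x"
  by (intro eq_vecI) auto

lemma J0_carrier [simp]: "J0 d \<in> carrier_mat (d - 2) (d - 1)"
  by (simp add: J0_def)

lemma I_low_carrier [simp]: "I_low d \<in> carrier_mat (d - 1) (d - 2)"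
  by (simp add: I_low_def)

lemma I_up_carrier [simp]: "I_up d \<in> carrier_mat (d - 1) (d - 2)"
  by (simp add: I_up_def)

lemma J0_mult_I_low: "J0 d * I_low d = 1\<^sub>m (d - 2)"
proof (rule eq_matI)
  fix i j assume "i < dim_row (1\<^sub>m (d - 2))" "j < dim_col (1\<^sub>m (d - 2))"
  then have i: "i < d - 2" and j: "j < d - 2" by auto
  then have "(J0 d * I_low d) $$ (i, j)
      = (\<Sum>k<d - 1. (if i = k then 1 else 0) * (if k = j then 1 else 0))"
    by (simp add: J0_def I_low_def scalar_prod_def lessThan_atLeast0)
  also have "\<dots> = (\<Sum>k<d - 1. if k = i then (if i = j then 1 else 0) else 0)"
    by (intro sum.cong) auto
  finally show "(J0 d * I_low d) $$ (i, j) = 1\<^sub>m (d - 2) $$ (i, j)"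
    using i j by auto
qed (simp_all add: J0_def I_low_def)

lemma Ecoef_carrier: "Ecoef d Mc k \<alpha> \<beta> \<in> carrier_mat (d - 2) (d - 2)"
  by (induction d Mc k \<alpha> \<beta> rule: Ecoef.induct) auto

lemma Ecoef_eq_zero: "\<alpha> + \<beta> < k \<Longrightarrow> Ecoef d Mc k \<alpha> \<beta> = 0\<^sub>m (d - 2) (d - 2)"
  by (cases \<alpha>) auto

lemma Ecoef_Suc_mult_vec:
  assumes Mc: "\<And>\<gamma> \<delta> \<alpha> \<beta>. Mc \<gamma> \<delta> \<alpha> \<beta> \<in> carrier_mat (d - 1) (d - 2)"
    and v: "v \<in> carrier_vec (d - 2)"
  shows "Ecoef d Mc k (Suc \<alpha>) \<beta> *\<^sub>v v =
    J0 d *\<^sub>v vsum (d - 1) (\<lambda>(\<gamma>, \<delta>). Mc \<gamma> \<delta> \<alpha> \<beta> *\<^sub>v (Ecoef d Mc k \<gamma> \<delta> *\<^sub>v v)) ({0..\<alpha>} \<times> {0..\<beta>})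
    - (J0 d * I_up d) *\<^sub>v (Ecoef d Mc k \<alpha> (Suc \<beta>) *\<^sub>v v)"
  (is "_ = J0 d *\<^sub>v ?V - ?S *\<^sub>v ?w")
proof (cases "Suc \<alpha> + \<beta> < k")
  case True
  then have "?V = vsum (d - 1) (\<lambda>_. 0\<^sub>v (d - 1)) ({0..\<alpha>} \<times> {0..\<beta>})"
    by (intro vsum_cong) (auto simp: Ecoef_eq_zero zero_mult_mat_vec[OF v] mult_mat_vec_zero[OF Mc])
  with True mult_mat_vec_zero[OF J0_carrier] show ?thesis
    by (simp add: vsum_zero Ecoef_eq_zero zero_mult_mat_vec[OF v]
        mult_mat_vec_zero[OF mult_carrier_mat[OF J0_carrier I_up_carrier]])
next
  case False
  define E where "E = Ecoef d Mc k"
  have S: "?S \<in> carrier_mat (d - 2) (d - 2)"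
    by (rule mult_carrier_mat[OF J0_carrier I_up_carrier])
  have E: "E \<gamma> \<delta> \<in> carrier_mat (d - 2) (d - 2)" for \<gamma> \<delta>
    by (simp add: E_def Ecoef_carrier)
  have JME: "J0 d * Mc \<gamma> \<delta> \<alpha> \<beta> * E \<gamma> \<delta> \<in> carrier_mat (d - 2) (d - 2)" for \<gamma> \<delta>
    by (intro mult_carrier_mat[OF mult_carrier_mat[OF J0_carrier Mc] E])
  have JME_v: "(J0 d * Mc \<gamma> \<delta> \<alpha> \<beta> * E \<gamma> \<delta>) *\<^sub>v v = J0 d *\<^sub>v (Mc \<gamma> \<delta> \<alpha> \<beta> *\<^sub>v (E \<gamma> \<delta> *\<^sub>v v))"
    for \<gamma> \<delta>
    using assoc_mult_mat_vec[OF mult_carrier_mat[OF J0_carrier Mc] E v]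
      assoc_mult_mat_vec[OF J0_carrier Mc mult_mat_vec_carrier[OF E v]] by simp
  have "E (Suc \<alpha>) \<beta> = - ?S * E \<alpha> (Suc \<beta>)
      + msum (d - 2) (d - 2) (\<lambda>(\<gamma>, \<delta>). J0 d * Mc \<gamma> \<delta> \<alpha> \<beta> * E \<gamma> \<delta>) ({0..\<alpha>} \<times> {0..\<beta>})"
    (is "_ = - ?S * E \<alpha> (Suc \<beta>) + ?Msum")
    using False by (simp add: E_def)
  then have "E (Suc \<alpha>) \<beta> *\<^sub>v v = (- ?S * E \<alpha> (Suc \<beta>)) *\<^sub>v v + ?Msum *\<^sub>v v"
    using add_mult_distrib_mat_vec[OF mult_carrier_mat[OF uminus_carrier_mat[OF S] E] msum_carrier v]
    by simp
  moreover have "(- ?S * E \<alpha> (Suc \<beta>)) *\<^sub>v v = - (?S *\<^sub>v ?w)"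
    using assoc_mult_mat_vec[OF uminus_carrier_mat[OF S] E v] carrier_matD[OF S] carrier_matD[OF E]
    by (simp add: E_def)
  moreover have "?Msum *\<^sub>v v
      = vsum (d - 2) (\<lambda>(\<gamma>, \<delta>). J0 d *\<^sub>v (Mc \<gamma> \<delta> \<alpha> \<beta> *\<^sub>v (E \<gamma> \<delta> *\<^sub>v v))) ({0..\<alpha>} \<times> {0..\<beta>})"
    using JME v by (subst msum_mult_mat_vec) (auto simp: JME_v intro!: vsum_cong)
  moreover have "\<dots> = J0 d *\<^sub>v ?V"
    using mult_mat_vec_carrier[OF Mc mult_mat_vec_carrier[OF E v]]
    by (subst mult_mat_vec_vsum[OF J0_carrier]) (auto simp: E_def intro!: vsum_cong)
  moreover have "- (?S *\<^sub>v ?w) + J0 d *\<^sub>v ?V = J0 d *\<^sub>v ?V - ?S *\<^sub>v ?w"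
    using mult_mat_vec_carrier[OF S mult_mat_vec_carrier[OF E v]]
      mult_mat_vec_carrier[OF J0_carrier vsum_carrier]
    by (intro eq_vecI) (auto simp: E_def)
  ultimately show ?thesis
    by (simp add: E_def)
qed

lemma in_Rh_Suc_eq:
  assumes u: "in_Rh d a T h m u" and h: "\<alpha> + \<beta> + 1 \<le> h"
  shows "u (Suc \<alpha>) \<beta> =
    J0 d *\<^sub>v vsum (d - 1) (\<lambda>(\<gamma>, \<delta>). Mcoef d a T m \<gamma> \<delta> \<alpha> \<beta> *\<^sub>v u \<gamma> \<delta>) ({0..\<alpha>} \<times> {0..\<beta>})
    - (J0 d * I_up d) *\<^sub>v u \<alpha> (Suc \<beta>)"
  (is "_ = J0 d *\<^sub>v ?V - ?S *\<^sub>v _")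
proof -
  have x: "u (Suc \<alpha>) \<beta> \<in> carrier_vec (d - 2)" and y: "u \<alpha> (Suc \<beta>) \<in> carrier_vec (d - 2)"
    using u h by (auto simp: in_Rh_def)
  have "?V = I_low d *\<^sub>v u (Suc \<alpha>) \<beta> + I_up d *\<^sub>v u \<alpha> (Suc \<beta>)"
    using u h by (simp add: in_Rh_def)
  then have "J0 d *\<^sub>v ?V = J0 d *\<^sub>v (I_low d *\<^sub>v u (Suc \<alpha>) \<beta>) + J0 d *\<^sub>v (I_up d *\<^sub>v u \<alpha> (Suc \<beta>))"
    using mult_add_distrib_mat_vec[OF J0_carrier mult_mat_vec_carrier[OF I_low_carrier x]
        mult_mat_vec_carrier[OF I_up_carrier y]]
    by simp
  also have "\<dots> = u (Suc \<alpha>) \<beta> + ?S *\<^sub>v u \<alpha> (Suc \<beta>)"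
    using x y by (simp add: J0_mult_I_low flip: assoc_mult_mat_vec[OF J0_carrier I_low_carrier]
        assoc_mult_mat_vec[OF J0_carrier I_up_carrier])
  finally show ?thesis
    using add_diff_cancel_right_vec[OF x mult_mat_vec_carrier[OF mult_carrier_mat[OF J0_carrier I_up_carrier] y]]
    by simp
qed

lemma vsum_Ecoef_Suc_mult_vec:
  assumes Mc: "\<And>\<gamma> \<delta> \<alpha> \<beta>. Mc \<gamma> \<delta> \<alpha> \<beta> \<in> carrier_mat (d - 1) (d - 2)"
    and w: "\<And>k. k \<in> K \<Longrightarrow> w k \<in> carrier_vec (d - 2)"
  shows "vsum (d - 2) (\<lambda>k. Ecoef d Mc k (Suc \<alpha>) \<beta> *\<^sub>v w k) K =
    J0 d *\<^sub>v vsum (d - 1) (\<lambda>(\<gamma>, \<delta>). Mc \<gamma> \<delta> \<alpha> \<beta> *\<^sub>v vsum (d - 2) (\<lambda>k. Ecoef d Mc k \<gamma> \<delta> *\<^sub>v w k) K)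
        ({0..\<alpha>} \<times> {0..\<beta>})
    - (J0 d * I_up d) *\<^sub>v vsum (d - 2) (\<lambda>k. Ecoef d Mc k \<alpha> (Suc \<beta>) *\<^sub>v w k) K"
proof -
  let ?R = "{0..\<alpha>} \<times> {0..\<beta>}" and ?S = "J0 d * I_up d" and ?E = "Ecoef d Mc"
  have Ew: "?E k \<gamma> \<delta> *\<^sub>v w k \<in> carrier_vec (d - 2)" if "k \<in> K" for k \<gamma> \<delta>
    by (rule mult_mat_vec_carrier[OF Ecoef_carrier w[OF that]])
  have "vsum (d - 2) (\<lambda>k. ?E k (Suc \<alpha>) \<beta> *\<^sub>v w k) K
      = vsum (d - 2) (\<lambda>k. J0 d *\<^sub>v vsum (d - 1) (\<lambda>(\<gamma>, \<delta>). Mc \<gamma> \<delta> \<alpha> \<beta> *\<^sub>v (?E k \<gamma> \<delta> *\<^sub>v w k)) ?R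
          - ?S *\<^sub>v (?E k \<alpha> (Suc \<beta>) *\<^sub>v w k)) K"
    by (intro vsum_cong) (simp_all add: Ecoef_Suc_mult_vec[OF Mc w] del: Ecoef.simps)
  also have "\<dots> = J0 d *\<^sub>v vsum (d - 1) (\<lambda>k. vsum (d - 1) (\<lambda>(\<gamma>, \<delta>). Mc \<gamma> \<delta> \<alpha> \<beta> *\<^sub>v (?E k \<gamma> \<delta> *\<^sub>v w k)) ?R) K
      - ?S *\<^sub>v vsum (d - 2) (\<lambda>k. ?E k \<alpha> (Suc \<beta>) *\<^sub>v w k) K"
    using Ew mult_mat_vec_carrier[OF mult_carrier_mat[OF J0_carrier I_up_carrier] Ew]
    by (simp only: vsum_diff mult_mat_vec_carrier[OF J0_carrier vsum_carrier]
        mult_mat_vec_vsum[OF J0_carrier vsum_carrier]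
        mult_mat_vec_vsum[OF mult_carrier_mat[OF J0_carrier I_up_carrier]])
  also have "vsum (d - 1) (\<lambda>k. vsum (d - 1) (\<lambda>(\<gamma>, \<delta>). Mc \<gamma> \<delta> \<alpha> \<beta> *\<^sub>v (?E k \<gamma> \<delta> *\<^sub>v w k)) ?R) K
      = vsum (d - 1) (\<lambda>(\<gamma>, \<delta>). Mc \<gamma> \<delta> \<alpha> \<beta> *\<^sub>v vsum (d - 2) (\<lambda>k. ?E k \<gamma> \<delta> *\<^sub>v w k) K) ?R"
    by (subst vsum_swap) (auto intro!: vsum_cong simp: mult_mat_vec_vsum[OF Mc Ew])
  finally show ?thesis .
qed

text \<open>Summing over the fixed range \<open>k \<le> h\<close> is harmless, because \<open>Ecoef\<close> vanishes for
  \<open>k > \<alpha> + \<beta>\<close>, and it lets the induction hypotheses be combined without reindexing.\<close>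
lemma in_Rh_expansion:
  assumes u: "in_Rh d a T h m u" and h: "\<alpha> + \<beta> \<le> h"
  shows "u \<alpha> \<beta> = vsum (d - 2) (\<lambda>k. Ecoef d (Mcoef d a T m) k \<alpha> \<beta> *\<^sub>v u 0 k) {0..h}"
  using h
proof (induction \<alpha> arbitrary: \<beta> rule: less_induct)
  case (less \<alpha>)
  let ?E = "Ecoef d (Mcoef d a T m)"
  have u0: "u 0 k \<in> carrier_vec (d - 2)" if "k \<in> {0..h}" for k
    using u that by (simp add: in_Rh_def)
  show ?case
  proof (cases \<alpha>)
    case 0
    have "vsum (d - 2) (\<lambda>k. ?E k \<alpha> \<beta> *\<^sub>v u 0 k) {0..h}
        = vsum (d - 2) (\<lambda>k. if k = \<beta> then u 0 \<beta> else 0\<^sub>v (d - 2)) {0..h}"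
      using 0 u0 by (intro vsum_cong) (auto simp: zero_mult_mat_vec)
    also have "\<dots> = u 0 \<beta>"
      using 0 less.prems u0 by (simp add: vsum_delta)
    finally show ?thesis
      using 0 by simp
  next
    case (Suc \<alpha>')
    have Mc: "Mcoef d a T m \<gamma> \<delta> \<alpha> \<beta> \<in> carrier_mat (d - 1) (d - 2)" for \<gamma> \<delta> \<alpha> \<beta>
      by (simp add: Mcoef_def Mder_def)
    have IH: "vsum (d - 2) (\<lambda>k. ?E k \<gamma> \<delta> *\<^sub>v u 0 k) {0..h} = u \<gamma> \<delta>"
      if "\<gamma> < \<alpha>" "\<gamma> + \<delta> \<le> h" for \<gamma> \<delta>
      using less.IH[OF that] by simp
    have "vsum (d - 2) (\<lambda>k. ?E k \<alpha> \<beta> *\<^sub>v u 0 k) {0..h}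
        = J0 d *\<^sub>v vsum (d - 1) (\<lambda>(\<gamma>, \<delta>). Mcoef d a T m \<gamma> \<delta> \<alpha>' \<beta> *\<^sub>v
              vsum (d - 2) (\<lambda>k. ?E k \<gamma> \<delta> *\<^sub>v u 0 k) {0..h}) ({0..\<alpha>'} \<times> {0..\<beta>})
          - (J0 d * I_up d) *\<^sub>v vsum (d - 2) (\<lambda>k. ?E k \<alpha>' (Suc \<beta>) *\<^sub>v u 0 k) {0..h}"
      unfolding Suc by (rule vsum_Ecoef_Suc_mult_vec[OF Mc u0])
    also have "\<dots> = J0 d *\<^sub>v vsum (d - 1) (\<lambda>(\<gamma>, \<delta>). Mcoef d a T m \<gamma> \<delta> \<alpha>' \<beta> *\<^sub>v u \<gamma> \<delta>) ({0..\<alpha>'} \<times> {0..\<beta>})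
          - (J0 d * I_up d) *\<^sub>v u \<alpha>' (Suc \<beta>)"
      using Suc less.prems
      by (intro arg_cong2[where f = "\<lambda>x y. J0 d *\<^sub>v x - (J0 d * I_up d) *\<^sub>v y"] vsum_cong)
        (auto simp: IH)
    also have "\<dots> = u \<alpha> \<beta>"
      using in_Rh_Suc_eq[OF u] Suc less.prems by simp
    finally show ?thesis ..
  qed
qed

theorem theorem2:
  fixes d h :: nat and U :: "(complex \<times> complex) set" and m :: "complex \<times> complex"
    and a :: "nat \<Rightarrow> cfun" and p :: "nat \<Rightarrow> cfun"
    and T :: "complex \<times> complex \<Rightarrow> complex mat"
    and u :: "nat \<Rightarrow> nat \<Rightarrow> complex Matrix.vec"
  assumes d3: "d \<ge> 3"
    and U_open: "open U"
    and a0: "a 0 = (\<lambda>_. 1)"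
    and a_holo: "\<forall>i\<le>d. holo2 U (a i)"
    and p_holo: "\<forall>i<d. holo2 U (p i)"
    and F_factor: "\<forall>z\<in>U. Fpoly d a z = (\<Prod>i<d. [:- p i z, 1:])"
    and p_distinct: "\<forall>z\<in>U. \<forall>i<d. \<forall>j<d. i \<noteq> j \<longrightarrow> p i z \<noteq> p j z"
    and T_dim: "\<forall>z\<in>U. T z \<in> carrier_mat (d - 1) d"
    and T_left_inv: "\<forall>z\<in>U. T z * Bmat d a z = 1\<^sub>m (d - 1)"
    and T_holo: "\<forall>i<d - 1. \<forall>j<d. holo2 U (\<lambda>z. T z $$ (i, j))"
    and m_in: "m \<in> U"
    and u_R: "in_Rh d a T h m u"
  shows "\<forall>\<alpha> \<beta>. \<alpha> + \<beta> \<le> h \<longrightarrow>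
           u \<alpha> \<beta> = vsum (d - 2) (\<lambda>k. Ecoef d (Mcoef d a T m) k \<alpha> \<beta> *\<^sub>v u 0 k) {0..\<alpha> + \<beta>}"
proof (intro allI impI)
  fix \<alpha> \<beta> assume h: "\<alpha> + \<beta> \<le> h"
  have "vsum (d - 2) (\<lambda>k. Ecoef d (Mcoef d a T m) k \<alpha> \<beta> *\<^sub>v u 0 k) {0..h}
      = vsum (d - 2) (\<lambda>k. Ecoef d (Mcoef d a T m) k \<alpha> \<beta> *\<^sub>v u 0 k) {0..\<alpha> + \<beta>}"
    using u_R h by (intro vsum_mono_neutral_right) (auto simp: Ecoef_eq_zero zero_mult_mat_vec in_Rh_def)
  with in_Rh_expansion[OF u_R h] show "u \<alpha> \<beta> = vsum (d - 2) (\<lambda>k. Ecoef d (Mcoef d a T m) k \<alpha> \<beta> *\<^sub>v u 0 k) {0..\<alpha> + \<beta>}"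
    by simp
qed

end
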